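(* Let $k\ge1$ and let $A_k$ be the matrix defined below. The reduced Gröbner basis of the toric ideal $I_{A_k}$ with respect to the lexicographic term ordering $\prec_{\mathrm{lex}}$ is $\{\mathbf{x}^{\mathbf{u}^+}-\mathbf{x}^{\mathbf{u}^-}:\mathbf{u}\in\mathcal{R}\}$, where $\mathcal{R}$ consists of the vector $(\mathbf{0}_k,\mathbf{1}_k,\mathbf{0}_k,-\mathbf{1}_k,1,-1)^{\mathsf T}$ together with the vectors $(\mathbf{e}_i,-\mathbf{e}_i,\mathbf{0}_k,\mathbf{0}_k,0,0)^{\mathsf T}$ and $(\mathbf{0}_k,\mathbf{0}_k,\mathbf{e}_i,-\mathbf{e}_i,0,0)^{\mathsf T}$ for $i\in[k]$ (here $\mathbf{e}_i$ are the standard unit vectors of $\mathbb{Z}^k$).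
   Context: $I_k$ is the $k\times k$ identity, $\mathbf{1}_k$ the all-ones and $\mathbf{0}_k$ the zero vector in $\mathbb{Z}^k$. Define $$A_k=\begin{pmatrix} I_k & I_k & 0 & 0 & -\mathbf{1}_k & \mathbf{0}\\ 0&0&I_k&I_k&\mathbf{0}&-\mathbf{1}_k\\ 0&0&0&0&1&1\end{pmatrix}\in\mathbb{Z}^{(2k+1)\times(4k+2)}$$ (zero blocks of appropriate sizes; last two columns are single columns). The toric ideal of $A\in\mathbb{Z}^{d\times n}$ is $I_A=\langle\mathbf{x}^{\mathbf{u}^+}-\mathbf{x}^{\mathbf{u}^-}:\mathbf{u}\in\ker(A)\cap\mathbb{Z}^n\rangle\subset K[x_1,\dots,x_n]$, with $\mathbf{u}^+,\mathbf{u}^-\in\mathbb{Z}^n_{\ge0}$ the positive and negative parts of $\mathbf{u}$. The lexicographic order on monomials (identified with exponent vectors in $\mathbb{Z}^n_{\ge0}$): $\mathbf{u}\prec_{\mathrm{lex}}\mathbf{v}$ iff $u_i<v_i$ for the smallest index $i$ with $u_i\neq v_i$. *)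

theory Defs
  imports "HOL-Library.Poly_Mapping"
begin

(* Monomials in variables x_0, x_1, ... (x_j here is x_{j+1} of the paper) are
   exponent vectors (finitely supported nat => nat); polynomials over a field K are
   finitely supported maps monomial => K, with the convolution product of Poly_Mapping. *)

type_synonym monom = "nat \<Rightarrow>\<^sub>0 nat"
type_synonym 'a mpoly = "monom \<Rightarrow>\<^sub>0 'a"

definition mon :: "monom \<Rightarrow> 'a::field mpoly" where
  "mon m = Poly_Mapping.single m 1"

definition polyring :: "nat \<Rightarrow> 'a::field mpoly set" where
  "polyring n = {p. \<forall>m\<in>Poly_Mapping.keys p. Poly_Mapping.keys (m::monom) \<subseteq> {..<n}}"

inductive_set ideal_gen :: "nat \<Rightarrow> 'a::field mpoly set \<Rightarrow> 'a mpoly set"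
  for n :: nat and S :: "'a mpoly set" where
  zero: "0 \<in> ideal_gen n S"
| gen: "s \<in> S \<Longrightarrow> r \<in> polyring n \<Longrightarrow> r * s \<in> ideal_gen n S"
| add: "p \<in> ideal_gen n S \<Longrightarrow> q \<in> ideal_gen n S \<Longrightarrow> p + q \<in> ideal_gen n S"

text \<open>Vectors in Z^n are functions nat \<Rightarrow> int vanishing outside {..<n};
 a d x n integer matrix is a function nat \<Rightarrow> nat \<Rightarrow> int (0-indexed).\<close>
definition int_kernel :: "nat \<Rightarrow> nat \<Rightarrow> (nat \<Rightarrow> nat \<Rightarrow> int) \<Rightarrow> (nat \<Rightarrow> int) set" where
  "int_kernel d n A = {u. (\<forall>j\<ge>n. u j = 0) \<and> (\<forall>i<d. (\<Sum>j<n. A i j * u j) = 0)}"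

definition pos_part :: "nat \<Rightarrow> (nat \<Rightarrow> int) \<Rightarrow> monom" where
  "pos_part n u = (\<Sum>j<n. Poly_Mapping.single j (nat (u j)))"

definition neg_part :: "nat \<Rightarrow> (nat \<Rightarrow> int) \<Rightarrow> monom" where
  "neg_part n u = (\<Sum>j<n. Poly_Mapping.single j (nat (- u j)))"

definition binom :: "nat \<Rightarrow> (nat \<Rightarrow> int) \<Rightarrow> 'a::field mpoly" where
  "binom n u = mon (pos_part n u) - mon (neg_part n u)"

definition toric_ideal :: "nat \<Rightarrow> nat \<Rightarrow> (nat \<Rightarrow> nat \<Rightarrow> int) \<Rightarrow> 'a::field mpoly set" where
  "toric_ideal d n A = ideal_gen n (binom n ` int_kernel d n A)"

definition lex_less :: "monom \<Rightarrow> monom \<Rightarrow> bool" where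
  "lex_less u v \<longleftrightarrow> (\<exists>i. (\<forall>j<i. Poly_Mapping.lookup u j = Poly_Mapping.lookup v j) \<and> Poly_Mapping.lookup u i < Poly_Mapping.lookup v i)"

definition lead_mon :: "'a::field mpoly \<Rightarrow> monom" where
  "lead_mon p = (THE m. m \<in> Poly_Mapping.keys p \<and> (\<forall>m'\<in>Poly_Mapping.keys p. m' \<noteq> m \<longrightarrow> lex_less m' m))"

definition lead_coeff_mp :: "'a::field mpoly \<Rightarrow> 'a" where
  "lead_coeff_mp p = Poly_Mapping.lookup p (lead_mon p)"

definition mon_dvd :: "monom \<Rightarrow> monom \<Rightarrow> bool" where
  "mon_dvd m m' \<longleftrightarrow> (\<forall>i. Poly_Mapping.lookup m i \<le> Poly_Mapping.lookup m' i)"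

definition initial_ideal :: "nat \<Rightarrow> 'a::field mpoly set \<Rightarrow> 'a mpoly set" where
  "initial_ideal n I = ideal_gen n {mon (lead_mon f) | f. f \<in> I \<and> f \<noteq> 0}"

definition is_groebner_basis :: "nat \<Rightarrow> 'a::field mpoly set \<Rightarrow> 'a mpoly set \<Rightarrow> bool" where
  "is_groebner_basis n I G \<longleftrightarrow> finite G \<and> G \<subseteq> I \<and> 0 \<notin> G \<and>
     ideal_gen n {mon (lead_mon g) | g. g \<in> G} = initial_ideal n I"

definition is_reduced_groebner_basis :: "nat \<Rightarrow> 'a::field mpoly set \<Rightarrow> 'a mpoly set \<Rightarrow> bool" where
  "is_reduced_groebner_basis n I G \<longleftrightarrow> is_groebner_basis n I G \<and>
     (\<forall>g\<in>G. lead_coeff_mp g = 1) \<and>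
     (\<forall>g\<in>G. \<forall>g'\<in>G. g' \<noteq> g \<longrightarrow> (\<forall>m\<in>Poly_Mapping.keys g. \<not> mon_dvd (lead_mon g') m))"

text \<open>The matrix A_k of size (2k+1) x (4k+2), 0-indexed rows and columns.\<close>
definition A_mat :: "nat \<Rightarrow> nat \<Rightarrow> nat \<Rightarrow> int" where
  "A_mat k i j =
     (if j \<ge> 4*k+2 then 0
      else if i < k then (if j = i \<or> j = k + i then 1 else if j = 4*k then -1 else 0)
      else if i < 2*k then (if j = k + i \<or> j = 2*k + i then 1 else if j = 4*k+1 then -1 else 0)
      else if i = 2*k then (if j = 4*k \<or> j = 4*k+1 then 1 else 0)
      else 0)"

definition R0 :: "nat \<Rightarrow> nat \<Rightarrow> int" where
  "R0 k j = (if k \<le> j \<and> j < 2*k then 1 else if 3*k \<le> j \<and> j < 4*k then -1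
             else if j = 4*k then 1 else if j = 4*k+1 then -1 else 0)"

definition Ra :: "nat \<Rightarrow> nat \<Rightarrow> nat \<Rightarrow> int" where
  "Ra k i j = (if j = i then 1 else if j = k + i then -1 else 0)"

definition Rb :: "nat \<Rightarrow> nat \<Rightarrow> nat \<Rightarrow> int" where
  "Rb k i j = (if j = 2*k + i then 1 else if j = 3*k + i then -1 else 0)"

definition R_set :: "nat \<Rightarrow> (nat \<Rightarrow> int) set" where
  "R_set k = {R0 k} \<union> {Ra k i | i. i < k} \<union> {Rb k i | i. i < k}"

end

theory Submission
  imports Defs
begin

(* Every element of a toric ideal is homogeneous for the A-grading: in each degree its
   coefficients sum to zero. So the leading monomial of a nonzero element shares its degree with
   a lex-smaller monomial of the same element. For A_k the row equations show that a monomial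
   divisible by none of x_i, x_(2k+i) (i < k) and x_k ... x_(2k-1) x_(4k) is lex-minimal in its
   degree, hence never a leading monomial of I_(A_k). Thus every leading monomial of the ideal is
   divisible by the leading monomial of one of the listed binomials, which makes them a Groebner
   basis; reducedness is an inspection of their supports. *)

lemma lex_less_irrefl: "\<not> lex_less m m"
  unfolding lex_less_def by auto

lemma lex_less_trans:
  assumes "lex_less m1 m2" "lex_less m2 m3"
  shows "lex_less m1 m3"
proof -
  obtain i where i: "\<forall>j<i. Poly_Mapping.lookup m1 j = Poly_Mapping.lookup m2 j"
    "Poly_Mapping.lookup m1 i < Poly_Mapping.lookup m2 i"
    using assms(1) unfolding lex_less_def by blast
  obtain i' where i': "\<forall>j<i'. Poly_Mapping.lookup m2 j = Poly_Mapping.lookup m3 j"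
    "Poly_Mapping.lookup m2 i' < Poly_Mapping.lookup m3 i'"
    using assms(2) unfolding lex_less_def by blast
  have "\<forall>j<min i i'. Poly_Mapping.lookup m1 j = Poly_Mapping.lookup m3 j"
    using i(1) i'(1) by simp
  moreover have "Poly_Mapping.lookup m1 (min i i') < Poly_Mapping.lookup m3 (min i i')"
    using i i' by (cases i i' rule: linorder_cases) (auto simp: min_def)
  ultimately show ?thesis
    unfolding lex_less_def by blast
qed

lemma lex_less_asym: "lex_less m m' \<Longrightarrow> \<not> lex_less m' m"
  using lex_less_trans lex_less_irrefl by blast

lemma lex_less_linear:
  assumes "m \<noteq> m'"
  shows "lex_less m m' \<or> lex_less m' m"
proof -
  have ex: "\<exists>i. Poly_Mapping.lookup m i \<noteq> Poly_Mapping.lookup m' i"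
  proof (rule ccontr)
    assume "\<nexists>i. Poly_Mapping.lookup m i \<noteq> Poly_Mapping.lookup m' i"
    then have "m = m'"
      by (intro poly_mapping_eqI) simp
    with assms show False ..
  qed
  define i where "i = (LEAST i. Poly_Mapping.lookup m i \<noteq> Poly_Mapping.lookup m' i)"
  have "Poly_Mapping.lookup m i \<noteq> Poly_Mapping.lookup m' i"
    unfolding i_def by (rule LeastI_ex[OF ex])
  have agree: "\<forall>j<i. Poly_Mapping.lookup m j = Poly_Mapping.lookup m' j"
    unfolding i_def using not_less_Least by blast
  show ?thesis
  proof (cases "Poly_Mapping.lookup m i < Poly_Mapping.lookup m' i")
    case True
    then show ?thesis
      unfolding lex_less_def using agree by (intro disjI1 exI[of _ i]) simp
  next
    case False
    with \<open>Poly_Mapping.lookup m i \<noteq> Poly_Mapping.lookup m' i\<close>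
    have "Poly_Mapping.lookup m' i < Poly_Mapping.lookup m i"
      by simp
    then show ?thesis
      unfolding lex_less_def using agree by (intro disjI2 exI[of _ i]) simp
  qed
qed

lemma finite_has_lex_greatest:
  assumes "finite S" "S \<noteq> {}"
  shows "\<exists>m\<in>S. \<forall>m'\<in>S. m' \<noteq> m \<longrightarrow> lex_less m' m"
  using assms
proof (induction S rule: finite_ne_induct)
  case (singleton x)
  then show ?case by auto
next
  case (insert x F)
  then obtain m where m: "m \<in> F" "\<forall>m'\<in>F. m' \<noteq> m \<longrightarrow> lex_less m' m"
    by blast
  show ?case
  proof (cases "lex_less m x")
    case True
    have "lex_less m' x" if "m' \<in> F" for m'
      using m(2) that True lex_less_trans[OF _ True] by (cases "m' = m") auto
    then show ?thesis by blast
  next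
    case False
    then have "x \<noteq> m \<longrightarrow> lex_less x m"
      using lex_less_linear by blast
    then show ?thesis using m by blast
  qed
qed

lemma lead_mon_greatest:
  assumes "(f :: 'a::field mpoly) \<noteq> 0"
  shows "lead_mon f \<in> Poly_Mapping.keys f
    \<and> (\<forall>m\<in>Poly_Mapping.keys f. m \<noteq> lead_mon f \<longrightarrow> lex_less m (lead_mon f))"
proof -
  let ?greatest = "\<lambda>m. m \<in> Poly_Mapping.keys f
    \<and> (\<forall>m'\<in>Poly_Mapping.keys f. m' \<noteq> m \<longrightarrow> lex_less m' m)"
  have "Poly_Mapping.keys f \<noteq> {}"
    using assms by simp
  then obtain m where m: "?greatest m"
    using finite_has_lex_greatest[OF finite_keys] by blast
  have "m' = m" if "?greatest m'" for m'
  proof (rule ccontr)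
    assume "m' \<noteq> m"
    then have "lex_less m' m" "lex_less m m'"
      using m that by auto
    then show False
      using lex_less_asym by blast
  qed
  with m have "\<exists>!m. ?greatest m"
    by (intro ex1I)
  then show ?thesis
    unfolding lead_mon_def by (rule theI')
qed

lemma lead_mon_in_keys: "(f :: 'a::field mpoly) \<noteq> 0 \<Longrightarrow> lead_mon f \<in> Poly_Mapping.keys f"
  using lead_mon_greatest by blast

lemma lex_less_lead_mon:
  "m \<in> Poly_Mapping.keys (f :: 'a::field mpoly) \<Longrightarrow> m \<noteq> lead_mon f
    \<Longrightarrow> lex_less m (lead_mon f)"
  using lead_mon_greatest[of f] by (metis empty_iff keys_zero)

lemma lead_mon_eqI:
  assumes "m \<in> Poly_Mapping.keys (f :: 'a::field mpoly)"
    and "\<forall>m'\<in>Poly_Mapping.keys f. m' \<noteq> m \<longrightarrow> lex_less m' m"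
  shows "lead_mon f = m"
proof (rule ccontr)
  assume "lead_mon f \<noteq> m"
  moreover have "f \<noteq> 0"
    using assms(1) by auto
  ultimately have "lex_less m (lead_mon f)" "lex_less (lead_mon f) m"
    using assms lex_less_lead_mon lead_mon_in_keys by auto
  then show False
    using lex_less_asym by blast
qed

lemma mon_diff_lead:
  assumes "lex_less q p"
  shows "Poly_Mapping.keys (mon p - mon q :: 'a::field mpoly) = {p, q}"
    and "lead_mon (mon p - mon q :: 'a mpoly) = p"
    and "lead_coeff_mp (mon p - mon q :: 'a mpoly) = 1"
proof -
  have "p \<noteq> q"
    using assms lex_less_irrefl by blast
  then have lookup_diff: "Poly_Mapping.lookup (mon p - mon q :: 'a mpoly) m
      = (if m = p then 1 else if m = q then -1 else 0)" for m
    by (auto simp: mon_def lookup_minus lookup_single when_def)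
  show keys: "Poly_Mapping.keys (mon p - mon q :: 'a mpoly) = {p, q}"
    by (auto simp: in_keys_iff lookup_diff split: if_splits)
  show lead: "lead_mon (mon p - mon q :: 'a mpoly) = p"
    using assms by (intro lead_mon_eqI) (auto simp: keys)
  show "lead_coeff_mp (mon p - mon q :: 'a mpoly) = 1"
    by (simp add: lead_coeff_mp_def lead lookup_diff)
qed

lemma polyring_mult:
  assumes "p \<in> polyring n" "q \<in> polyring n"
  shows "p * q \<in> polyring n"
  unfolding polyring_def
proof (intro CollectI ballI)
  fix m
  assume "m \<in> Poly_Mapping.keys (p * q)"
  then obtain a b where ab: "m = a + b" "a \<in> Poly_Mapping.keys p" "b \<in> Poly_Mapping.keys q"
    using keys_mult by blast
  have "Poly_Mapping.keys a \<subseteq> {..<n}" "Poly_Mapping.keys b \<subseteq> {..<n}"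
    using assms ab(2,3) unfolding polyring_def by blast+
  then show "Poly_Mapping.keys m \<subseteq> {..<n}"
    using ab(1) keys_add[of a b] by blast
qed

lemma polyring_add: "p \<in> polyring n \<Longrightarrow> q \<in> polyring n \<Longrightarrow> p + q \<in> polyring n"
  unfolding polyring_def using keys_add[of p q] by blast

lemma polyring_diff: "p \<in> polyring n \<Longrightarrow> q \<in> polyring n \<Longrightarrow> p - q \<in> polyring n"
  unfolding polyring_def using keys_diff[of p q] by blast

lemma mon_in_polyring: "Poly_Mapping.keys m \<subseteq> {..<n} \<Longrightarrow> mon m \<in> polyring n"
  unfolding polyring_def mon_def by simp

lemma one_in_polyring: "1 \<in> polyring n"
  unfolding polyring_def by simp

lemma ideal_gen_subset_polyring: "S \<subseteq> polyring n \<Longrightarrow> ideal_gen n S \<subseteq> polyring n"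
proof
  fix p
  assume "p \<in> ideal_gen n S" "S \<subseteq> polyring n"
  then show "p \<in> polyring n"
  proof (induction rule: ideal_gen.induct)
    case zero
    then show ?case by (simp add: polyring_def)
  next
    case (gen s r)
    then show ?case by (blast intro: polyring_mult)
  next
    case (add p q)
    then show ?case by (blast intro: polyring_add)
  qed
qed

lemma ideal_gen_mult:
  assumes "r \<in> polyring n" "p \<in> ideal_gen n S"
  shows "r * p \<in> ideal_gen n S"
  using assms(2)
proof (induction rule: ideal_gen.induct)
  case zero
  then show ?case by (simp add: ideal_gen.zero)
next
  case (gen s r')
  then show ?case
    using ideal_gen.gen polyring_mult[OF assms(1)] by (metis mult.assoc)
next
  case (add p q)
  then show ?case by (simp add: distrib_left ideal_gen.add)
qed

lemma ideal_gen_subset: "S \<subseteq> ideal_gen n T \<Longrightarrow> ideal_gen n S \<subseteq> ideal_gen n T"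
proof
  fix p
  assume "p \<in> ideal_gen n S" "S \<subseteq> ideal_gen n T"
  then show "p \<in> ideal_gen n T"
    by (induction rule: ideal_gen.induct) (auto intro: ideal_gen.intros ideal_gen_mult)
qed

lemma ideal_gen_mono: "S \<subseteq> T \<Longrightarrow> ideal_gen n S \<subseteq> ideal_gen n T"
  by (rule ideal_gen_subset) (auto intro: ideal_gen.gen[where r = 1, simplified] one_in_polyring)

lemma mon_in_ideal_gen_if_dvd:
  assumes "mon_dvd a b" "Poly_Mapping.keys b \<subseteq> {..<n}" "mon a \<in> S"
  shows "(mon b :: 'a::field mpoly) \<in> ideal_gen n S"
proof -
  have "b = (b - a) + a"
    by (rule poly_mapping_eqI) (use assms(1) in \<open>auto simp: lookup_add lookup_minus mon_dvd_def\<close>)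
  then have "(mon b :: 'a mpoly) = mon (b - a) * mon a"
    unfolding mon_def mult_single by simp
  moreover have "Poly_Mapping.keys (b - a) \<subseteq> Poly_Mapping.keys b"
    by (auto simp: in_keys_iff lookup_minus)
  then have "Poly_Mapping.keys (b - a) \<subseteq> {..<n}"
    using assms(2) by blast
  ultimately show ?thesis
    using ideal_gen.gen[OF assms(3) mon_in_polyring] by simp
qed

lemma is_groebner_basisI:
  assumes "finite G" "G \<subseteq> I" "0 \<notin> G" "I \<subseteq> polyring n"
    and dvd: "\<And>f. f \<in> I \<Longrightarrow> f \<noteq> 0 \<Longrightarrow> \<exists>g\<in>G. mon_dvd (lead_mon g) (lead_mon f)"
  shows "is_groebner_basis n I (G :: 'a::field mpoly set)"
proof -
  have "ideal_gen n {mon (lead_mon g) | g. g \<in> G} \<subseteq> initial_ideal n I"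
    unfolding initial_ideal_def using assms(2,3) by (intro ideal_gen_mono) blast
  moreover have "initial_ideal n I \<subseteq> ideal_gen n {mon (lead_mon g) | g. g \<in> G}"
    unfolding initial_ideal_def
  proof (intro ideal_gen_subset subsetI)
    fix p
    assume "p \<in> {mon (lead_mon f) | f. f \<in> I \<and> f \<noteq> 0}"
    then obtain f where f: "p = mon (lead_mon f)" "f \<in> I" "f \<noteq> 0"
      by blast
    have "Poly_Mapping.keys (lead_mon f) \<subseteq> {..<n}"
      using lead_mon_in_keys[OF f(3)] f(2) assms(4) unfolding polyring_def by blast
    with dvd[OF f(2,3)] show "p \<in> ideal_gen n {mon (lead_mon g) | g. g \<in> G}"
      unfolding f(1) by (blast intro: mon_in_ideal_gen_if_dvd)
  qed
  ultimately show ?thesis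
    unfolding is_groebner_basis_def using assms(1-3) by blast
qed

definition graded_coeff_sum :: "(monom \<Rightarrow> 'b) \<Rightarrow> 'b \<Rightarrow> 'a::field mpoly \<Rightarrow> 'a" where
  "graded_coeff_sum D v f
    = (\<Sum>m\<in>Poly_Mapping.keys f. if D m = v then Poly_Mapping.lookup f m else 0)"

lemma graded_coeff_sum_superset:
  assumes "finite T" "Poly_Mapping.keys f \<subseteq> T"
  shows "graded_coeff_sum D v f = (\<Sum>m\<in>T. if D m = v then Poly_Mapping.lookup f m else 0)"
  unfolding graded_coeff_sum_def
  by (rule sum.mono_neutral_left[OF assms]) (auto simp: in_keys_iff)

lemma graded_coeff_sum_zero: "graded_coeff_sum D v 0 = 0"
  unfolding graded_coeff_sum_def by simp

lemma graded_coeff_sum_single: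
  "graded_coeff_sum D v (Poly_Mapping.single m c) = (if D m = v then c else 0)"
  unfolding graded_coeff_sum_def by simp

lemma graded_coeff_sum_add:
  "graded_coeff_sum D v (f + g) = graded_coeff_sum D v f + graded_coeff_sum D v g"
proof -
  let ?T = "Poly_Mapping.keys f \<union> Poly_Mapping.keys g"
  have "graded_coeff_sum D v (f + g) = (\<Sum>m\<in>?T. if D m = v then Poly_Mapping.lookup (f + g) m else 0)"
    using keys_add[of f g] by (intro graded_coeff_sum_superset) auto
  also have "\<dots> = (\<Sum>m\<in>?T. (if D m = v then Poly_Mapping.lookup f m else 0)
                        + (if D m = v then Poly_Mapping.lookup g m else 0))"
    by (rule sum.cong) (auto simp: lookup_add)
  also have "\<dots> = graded_coeff_sum D v f + graded_coeff_sum D v g"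
    using graded_coeff_sum_superset[of ?T f D v] graded_coeff_sum_superset[of ?T g D v]
    by (simp add: sum.distrib)
  finally show ?thesis .
qed

lemma graded_coeff_sum_diff:
  "graded_coeff_sum D v (f - g) = graded_coeff_sum D v f - graded_coeff_sum D v g"
  using graded_coeff_sum_add[of D v "f - g" g] by simp

lemma graded_coeff_sum_sum:
  "finite I \<Longrightarrow> graded_coeff_sum D v (\<Sum>i\<in>I. F i) = (\<Sum>i\<in>I. graded_coeff_sum D v (F i))"
  by (induction I rule: finite_induct) (simp_all add: graded_coeff_sum_zero graded_coeff_sum_add)

lemma graded_coeff_sum_mult_binomial:
  assumes "\<And>m. D (m + p) = D (m + q)"
  shows "graded_coeff_sum D v (r * (mon p - mon q)) = 0"
proof -
  let ?c = "Poly_Mapping.lookup r"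
  have "r = (\<Sum>m\<in>Poly_Mapping.keys r. Poly_Mapping.single m (?c m))"
    by (rule poly_mapping_eqI) (simp add: lookup_sum lookup_single when_def in_keys_iff)
  then have "r * (mon p - mon q) = (\<Sum>m\<in>Poly_Mapping.keys r. Poly_Mapping.single m (?c m)) * (mon p - mon q)"
    by simp
  also have "\<dots> = (\<Sum>m\<in>Poly_Mapping.keys r.
      Poly_Mapping.single (m + p) (?c m) - Poly_Mapping.single (m + q) (?c m))"
    by (simp add: sum_distrib_right right_diff_distrib mon_def mult_single sum_subtractf)
  finally show ?thesis
    by (simp add: graded_coeff_sum_sum graded_coeff_sum_diff graded_coeff_sum_single assms)
qed

lemma graded_coeff_sum_ideal_gen:
  assumes "p \<in> ideal_gen n S"
    and "\<And>s. s \<in> S \<Longrightarrow> \<exists>a b. s = mon a - mon b \<and> (\<forall>m. D (m + a) = D (m + b))"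
  shows "graded_coeff_sum D v p = 0"
  using assms
proof (induction rule: ideal_gen.induct)
  case zero
  then show ?case by (simp add: graded_coeff_sum_zero)
next
  case (gen s r)
  then obtain a b where "s = mon a - mon b" "\<And>m. D (m + a) = D (m + b)"
    by blast
  then show ?case by (simp add: graded_coeff_sum_mult_binomial)
next
  case (add p q)
  then show ?case by (simp add: graded_coeff_sum_add)
qed

(* Rows i >= d are set to 0 so that degrees can be compared as functions. *)
definition A_degree :: "nat \<Rightarrow> nat \<Rightarrow> (nat \<Rightarrow> nat \<Rightarrow> int) \<Rightarrow> monom \<Rightarrow> nat \<Rightarrow> int" where
  "A_degree d n A m = (\<lambda>i. if i < d then (\<Sum>j<n. A i j * int (Poly_Mapping.lookup m j)) else 0)"

lemma A_degree_add: "A_degree d n A (a + b) = (\<lambda>i. A_degree d n A a i + A_degree d n A b i)"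
  unfolding A_degree_def by (simp add: lookup_add sum.distrib algebra_simps fun_eq_iff)

lemma lookup_pos_part: "Poly_Mapping.lookup (pos_part n u) j = (if j < n then nat (u j) else 0)"
  unfolding pos_part_def by (simp add: lookup_sum lookup_single when_def)

lemma lookup_neg_part: "Poly_Mapping.lookup (neg_part n u) j = (if j < n then nat (- u j) else 0)"
  unfolding neg_part_def by (simp add: lookup_sum lookup_single when_def)

lemma keys_pos_part_subset: "Poly_Mapping.keys (pos_part n u) \<subseteq> {..<n}"
  by (auto simp: in_keys_iff lookup_pos_part split: if_splits)

lemma keys_neg_part_subset: "Poly_Mapping.keys (neg_part n u) \<subseteq> {..<n}"
  by (auto simp: in_keys_iff lookup_neg_part split: if_splits)

lemma A_degree_pos_part_eq_neg_part:
  assumes "u \<in> int_kernel d n A"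
  shows "A_degree d n A (pos_part n u) = A_degree d n A (neg_part n u)"
proof
  fix i
  have "(\<Sum>j<n. A i j * int (Poly_Mapping.lookup (pos_part n u) j))
      - (\<Sum>j<n. A i j * int (Poly_Mapping.lookup (neg_part n u) j))
      = (\<Sum>j<n. A i j * int (Poly_Mapping.lookup (pos_part n u) j)
             - A i j * int (Poly_Mapping.lookup (neg_part n u) j))"
    by (simp add: sum_subtractf)
  also have "\<dots> = (\<Sum>j<n. A i j * u j)"
    by (rule sum.cong) (auto simp: lookup_pos_part lookup_neg_part simp flip: right_diff_distrib)
  finally show "A_degree d n A (pos_part n u) i = A_degree d n A (neg_part n u) i"
    using assms unfolding A_degree_def int_kernel_def by auto
qed

lemma toric_ideal_subset_polyring: "toric_ideal d n A \<subseteq> polyring n"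
  unfolding toric_ideal_def binom_def
  by (intro ideal_gen_subset_polyring)
    (auto intro!: polyring_diff mon_in_polyring keys_pos_part_subset keys_neg_part_subset)

lemma binom_in_toric_ideal: "u \<in> int_kernel d n A \<Longrightarrow> binom n u \<in> toric_ideal d n A"
  unfolding toric_ideal_def
  using ideal_gen.gen[OF imageI one_in_polyring, of u "int_kernel d n A" "binom n" n] by simp

lemma toric_ideal_lead_mon_partner:
  assumes "(f :: 'a::field mpoly) \<in> toric_ideal d n A" "f \<noteq> 0"
  obtains m where "m \<in> Poly_Mapping.keys f" "lex_less m (lead_mon f)"
    "A_degree d n A m = A_degree d n A (lead_mon f)"
proof -
  let ?D = "A_degree d n A" and ?l = "lead_mon f"
  have graded: "graded_coeff_sum ?D (?D ?l) f = 0"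
    using assms(1) unfolding toric_ideal_def
  proof (rule graded_coeff_sum_ideal_gen)
    fix s :: "'a mpoly"
    assume "s \<in> binom n ` int_kernel d n A"
    then obtain u where "u \<in> int_kernel d n A" "s = binom n u"
      by blast
    then show "\<exists>a b. s = mon a - mon b \<and> (\<forall>m. ?D (m + a) = ?D (m + b))"
      by (intro exI[of _ "pos_part n u"] exI[of _ "neg_part n u"])
        (simp add: binom_def A_degree_add A_degree_pos_part_eq_neg_part)
  qed
  have lead: "?l \<in> Poly_Mapping.keys f"
    using lead_mon_in_keys[OF assms(2)] .
  have "\<exists>m\<in>Poly_Mapping.keys f. m \<noteq> ?l \<and> ?D m = ?D ?l"
  proof (rule ccontr)
    assume "\<not> ?thesis"
    then have "graded_coeff_sum ?D (?D ?l) f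
        = (\<Sum>m\<in>Poly_Mapping.keys f. if m = ?l then Poly_Mapping.lookup f m else 0)"
      unfolding graded_coeff_sum_def by (intro sum.cong) auto
    also have "\<dots> = Poly_Mapping.lookup f ?l"
      using lead by simp
    finally show False
      using graded lead by (simp add: in_keys_iff)
  qed
  then show thesis
    using that lex_less_lead_mon by blast
qed

lemma sum_A_mat_row_low:
  assumes "i < k"
  shows "(\<Sum>j<4*k+2. A_mat k i j * x j) = x i + x (k+i) - x (4*k)"
proof -
  have "(\<Sum>j<4*k+2. A_mat k i j * x j) = (\<Sum>j<4*k+2. (if j = i then x j else 0)
      + (if j = k+i then x j else 0) - (if j = 4*k then x j else 0))"
    by (rule sum.cong) (use assms in \<open>auto simp: A_mat_def\<close>)
  also have "\<dots> = x i + x (k+i) - x (4*k)"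
    using assms by (simp add: sum.distrib sum_subtractf)
  finally show ?thesis .
qed

lemma sum_A_mat_row_high:
  assumes "i < k"
  shows "(\<Sum>j<4*k+2. A_mat k (k+i) j * x j) = x (2*k+i) + x (3*k+i) - x (4*k+1)"
proof -
  have "(\<Sum>j<4*k+2. A_mat k (k+i) j * x j) = (\<Sum>j<4*k+2. (if j = 2*k+i then x j else 0)
      + (if j = 3*k+i then x j else 0) - (if j = 4*k+1 then x j else 0))"
    by (rule sum.cong) (use assms in \<open>auto simp: A_mat_def\<close>)
  also have "\<dots> = x (2*k+i) + x (3*k+i) - x (4*k+1)"
    using assms by (simp add: sum.distrib sum_subtractf)
  finally show ?thesis .
qed

lemma sum_A_mat_row_last: "(\<Sum>j<4*k+2. A_mat k (2*k) j * x j) = x (4*k) + x (4*k+1)"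
proof -
  have "(\<Sum>j<4*k+2. A_mat k (2*k) j * x j)
      = (\<Sum>j<4*k+2. (if j = 4*k then x j else 0) + (if j = 4*k+1 then x j else 0))"
    by (rule sum.cong) (auto simp: A_mat_def)
  also have "\<dots> = x (4*k) + x (4*k+1)"
    by (simp add: sum.distrib)
  finally show ?thesis .
qed

lemma less_2k_cases:
  fixes i k :: nat
  assumes "i < 2*k"
  obtains "i < k" | i' where "i = k + i'" "i' < k"
proof (cases "i < k")
  case False
  then have "i = k + (i - k)" "i - k < k"
    using assms by auto
  then show thesis by (rule that(2))
qed (rule that(1))

lemma int_kernel_A_matI:
  assumes "\<forall>j\<ge>4*k+2. x j = 0"
    and "\<And>i. i < k \<Longrightarrow> x i + x (k+i) = x (4*k)"
    and "\<And>i. i < k \<Longrightarrow> x (2*k+i) + x (3*k+i) = x (4*k+1)"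
    and "x (4*k) + x (4*k+1) = 0"
  shows "x \<in> int_kernel (2*k+1) (4*k+2) (A_mat k)"
  unfolding int_kernel_def
proof (intro CollectI conjI allI impI)
  fix j
  assume "4*k+2 \<le> j"
  then show "x j = 0" using assms(1) by simp
next
  fix i
  assume "i < 2*k+1"
  then consider "i < 2*k" | "i = 2*k" by linarith
  then show "(\<Sum>j<4*k+2. A_mat k i j * x j) = 0"
  proof cases
    case 1
    then show ?thesis
    proof (cases rule: less_2k_cases)
      case 1
      show ?thesis
        unfolding sum_A_mat_row_low[OF 1] using assms(2)[OF 1] by simp
    next
      case (2 i')
      show ?thesis
        unfolding 2(1) sum_A_mat_row_high[OF 2(2)] using assms(3)[OF 2(2)] by simp
    qed
  next
    case 2
    show ?thesis
      unfolding 2 sum_A_mat_row_last using assms(4) by simp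
  qed
qed

lemma A_degree_A_mat_eqD:
  fixes x y :: monom
  defines "X \<equiv> Poly_Mapping.lookup x" and "Y \<equiv> Poly_Mapping.lookup y"
  assumes "A_degree (2*k+1) (4*k+2) (A_mat k) x = A_degree (2*k+1) (4*k+2) (A_mat k) y"
  shows "\<And>i. i < k \<Longrightarrow> X i + X (k+i) + Y (4*k) = Y i + Y (k+i) + X (4*k)"
    and "\<And>i. i < k \<Longrightarrow> X (2*k+i) + X (3*k+i) + Y (4*k+1) = Y (2*k+i) + Y (3*k+i) + X (4*k+1)"
    and "X (4*k) + X (4*k+1) = Y (4*k) + Y (4*k+1)"
proof -
  have row: "(\<Sum>j<4*k+2. A_mat k i j * int (X j)) = (\<Sum>j<4*k+2. A_mat k i j * int (Y j))"
    if "i < 2*k+1" for i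
    using fun_cong[OF assms(3), of i] that unfolding A_degree_def X_def Y_def by simp
  show "X i + X (k+i) + Y (4*k) = Y i + Y (k+i) + X (4*k)" if "i < k" for i
    using row[of i] that unfolding sum_A_mat_row_low[OF that] by simp
  show "X (2*k+i) + X (3*k+i) + Y (4*k+1) = Y (2*k+i) + Y (3*k+i) + X (4*k+1)" if "i < k" for i
    using row[of "k+i"] that unfolding sum_A_mat_row_high[OF that] by simp
  show "X (4*k) + X (4*k+1) = Y (4*k) + Y (4*k+1)"
    using row[of "2*k"] unfolding sum_A_mat_row_last by simp
qed

(* The standard monomials of the claimed basis: divisible by none of its leading monomials
   x_i, x_(2k+i) (i < k) and x_k ... x_(2k-1) x_(4k) (0-based indices). *)
definition A_mat_standard :: "nat \<Rightarrow> monom \<Rightarrow> bool" where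
  "A_mat_standard k m \<longleftrightarrow>
     (\<forall>i<k. Poly_Mapping.lookup m i = 0 \<and> Poly_Mapping.lookup m (2*k+i) = 0) \<and>
     ((\<exists>i<k. Poly_Mapping.lookup m (k+i) = 0) \<or> Poly_Mapping.lookup m (4*k) = 0)"

(* Look at the first index where a lex-smaller y of the same degree differs from x. In the
   block x_k..x_(2k-1) the first row equations force y_(4k) < x_(4k), hence x_(4k) > 0, hence
   some x_(k+j) = 0, and the row equation for that j gives y_(4k) >= x_(4k); every other block
   is ruled out by standardness or directly by the row equations. *)
lemma not_lex_less_A_mat_standard:
  fixes x y :: monom
  defines "X \<equiv> Poly_Mapping.lookup x" and "Y \<equiv> Poly_Mapping.lookup y"
  assumes "k \<ge> 1" "A_mat_standard k x" "Poly_Mapping.keys x \<subseteq> {..<4*k+2}"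
    and "A_degree (2*k+1) (4*k+2) (A_mat k) x = A_degree (2*k+1) (4*k+2) (A_mat k) y"
  shows "\<not> lex_less y x"
proof
  assume "lex_less y x"
  then obtain i where agree: "\<And>j. j < i \<Longrightarrow> Y j = X j" and less: "Y i < X i"
    unfolding lex_less_def X_def Y_def by auto
  note rows = A_degree_A_mat_eqD[OF assms(6), folded X_def Y_def]
  have low: "X j = 0" "X (2*k+j) = 0" if "j < k" for j
    using assms(4) that unfolding A_mat_standard_def X_def by auto
  have mid: "(\<exists>j<k. X (k+j) = 0) \<or> X (4*k) = 0"
    using assms(4) unfolding A_mat_standard_def X_def by auto
  have high: "X j = 0" if "4*k+2 \<le> j" for j
    using assms(5) that unfolding X_def by (auto simp: in_keys_iff)
  have last: "Y (4*k) = X (4*k)" "Y (4*k+1) = X (4*k+1)" if "k < i"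
    using rows(1)[of 0] rows(3) agree[of 0] agree[of k] that assms(3) by auto
  consider "i < k" | "k \<le> i" "i < 2*k" | "2*k \<le> i" "i < 3*k" | "3*k \<le> i" "i < 4*k"
    | "i = 4*k" | "i = 4*k+1" | "4*k+2 \<le> i"
    by linarith
  then show False
  proof cases
    case 1
    then show False using less low(1) by simp
  next
    case 2
    define i' where "i' = i - k"
    have i': "i = k + i'" "i' < k"
      using 2 unfolding i'_def by auto
    have "Y (4*k) < X (4*k)"
      using rows(1)[OF i'(2)] agree[of i'] less i' assms(3) by simp
    with mid obtain j where j: "j < k" "X (k+j) = 0"
      by auto
    have "X (4*k) \<le> Y (4*k)"
      using rows(1)[OF j(1)] j low(1)[OF j(1)] agree[of j] 2 by simp
    then show False
      using \<open>Y (4*k) < X (4*k)\<close> by simp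
  next
    case 3
    then have "X i = 0"
      using low(2)[of "i - 2*k"] by simp
    then show False using less by simp
  next
    case 4
    define i' where "i' = i - 3*k"
    have i': "i = 3*k + i'" "i' < k"
      using 4 unfolding i'_def by auto
    have "Y (2*k+i') = X (2*k+i')"
      using agree i' by simp
    then show False
      using rows(2)[OF i'(2)] last 4 less i' assms(3) by simp
  next
    case 5
    then show False using last(1) less assms(3) by simp
  next
    case 6
    then show False using last(2) less assms(3) by simp
  next
    case 7
    then show False using high less by simp
  qed
qed

lemma lead_mon_toric_A_mat_not_standard:
  assumes "k \<ge> 1" "(f :: 'a::field mpoly) \<in> toric_ideal (2*k+1) (4*k+2) (A_mat k)" "f \<noteq> 0"
  shows "\<not> A_mat_standard k (lead_mon f)"
proof
  assume standard: "A_mat_standard k (lead_mon f)"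
  obtain m where m: "lex_less m (lead_mon f)"
    "A_degree (2*k+1) (4*k+2) (A_mat k) m = A_degree (2*k+1) (4*k+2) (A_mat k) (lead_mon f)"
    using toric_ideal_lead_mon_partner[OF assms(2,3)] by metis
  have "Poly_Mapping.keys (lead_mon f) \<subseteq> {..<4*k+2}"
    using lead_mon_in_keys[OF assms(3)] assms(2) toric_ideal_subset_polyring
    unfolding polyring_def by blast
  then show False
    using not_lex_less_A_mat_standard[OF assms(1) standard _ m(2)[symmetric]] m(1) by blast
qed

lemma pos_part_Ra: "i < k \<Longrightarrow> k + i < n \<Longrightarrow> pos_part n (Ra k i) = Poly_Mapping.single i 1"
  by (rule poly_mapping_eqI) (auto simp: lookup_pos_part lookup_single when_def Ra_def)

lemma neg_part_Ra: "i < k \<Longrightarrow> k + i < n \<Longrightarrow> neg_part n (Ra k i) = Poly_Mapping.single (k+i) 1"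
  by (rule poly_mapping_eqI) (auto simp: lookup_neg_part lookup_single when_def Ra_def)

lemma pos_part_Rb:
  "i < k \<Longrightarrow> 3*k + i < n \<Longrightarrow> pos_part n (Rb k i) = Poly_Mapping.single (2*k+i) 1"
  by (rule poly_mapping_eqI) (auto simp: lookup_pos_part lookup_single when_def Rb_def)

lemma neg_part_Rb:
  "i < k \<Longrightarrow> 3*k + i < n \<Longrightarrow> neg_part n (Rb k i) = Poly_Mapping.single (3*k+i) 1"
  by (rule poly_mapping_eqI) (auto simp: lookup_neg_part lookup_single when_def Rb_def)

lemma lookup_pos_part_R0:
  "Poly_Mapping.lookup (pos_part n (R0 k)) j = (if j < n \<and> (k \<le> j \<and> j < 2*k \<or> j = 4*k) then 1 else 0)"
  by (auto simp: lookup_pos_part R0_def)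

lemma lookup_neg_part_R0:
  "Poly_Mapping.lookup (neg_part n (R0 k)) j
    = (if j < n \<and> (3*k \<le> j \<and> j < 4*k \<or> j = 4*k+1) then 1 else 0)"
  by (auto simp: lookup_neg_part R0_def)

lemma mon_dvd_single_iff: "mon_dvd (Poly_Mapping.single j 1) m \<longleftrightarrow> 1 \<le> Poly_Mapping.lookup m j"
  unfolding mon_dvd_def by (auto simp: lookup_single when_def)

lemma R_set_cases:
  assumes "u \<in> R_set k"
  obtains "u = R0 k" | i where "i < k" "u = Ra k i" | i where "i < k" "u = Rb k i"
  using assms unfolding R_set_def by blast

lemma finite_R_set: "finite (R_set k)"
proof -
  have "R_set k = insert (R0 k) (Ra k ` {..<k} \<union> Rb k ` {..<k})"
    unfolding R_set_def by blast
  then show ?thesis by simp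
qed

lemma R_set_subset_int_kernel: "R_set k \<subseteq> int_kernel (2*k+1) (4*k+2) (A_mat k)"
proof
  fix u
  assume "u \<in> R_set k"
  then show "u \<in> int_kernel (2*k+1) (4*k+2) (A_mat k)"
  proof (cases rule: R_set_cases)
    case 1
    show ?thesis
      unfolding 1 by (rule int_kernel_A_matI) (auto simp: R0_def)
  next
    case (2 i)
    show ?thesis
      unfolding 2(2) by (rule int_kernel_A_matI) (use 2(1) in \<open>auto simp: Ra_def\<close>)
  next
    case (3 i)
    show ?thesis
      unfolding 3(2) by (rule int_kernel_A_matI) (use 3(1) in \<open>auto simp: Rb_def\<close>)
  qed
qed

lemma lex_less_neg_part_pos_part_R_set:
  assumes "k \<ge> 1" "u \<in> R_set k"
  shows "lex_less (neg_part (4*k+2) u) (pos_part (4*k+2) u)"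
  using assms(2)
proof (cases rule: R_set_cases)
  case 1
  show ?thesis
    unfolding lex_less_def 1 lookup_pos_part_R0 lookup_neg_part_R0
    using assms(1) by (intro exI[of _ k]) auto
next
  case (2 i)
  then show ?thesis
    unfolding lex_less_def by (intro exI[of _ i]) (simp add: pos_part_Ra neg_part_Ra lookup_single)
next
  case (3 i)
  then show ?thesis
    unfolding lex_less_def
    by (intro exI[of _ "2*k+i"]) (simp add: pos_part_Rb neg_part_Rb lookup_single)
qed

(* Each leading monomial pos_part u' contains a variable (x_i, x_(2k+i) or x_(4k)) that occurs in
   no other monomial of the basis. *)
lemma mon_dvd_pos_part_R_set_unique:
  assumes "u \<in> R_set k" "u' \<in> R_set k"
    and "m \<in> {pos_part (4*k+2) u, neg_part (4*k+2) u}" "mon_dvd (pos_part (4*k+2) u') m"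
  shows "u' = u"
  using assms(2)
proof (cases rule: R_set_cases)
  case 1
  have "Poly_Mapping.lookup (pos_part (4*k+2) u') (4*k) \<le> Poly_Mapping.lookup m (4*k)"
    using assms(4) unfolding mon_dvd_def ..
  then have "1 \<le> Poly_Mapping.lookup m (4*k)"
    by (simp add: 1 lookup_pos_part_R0)
  with assms(1,3) show ?thesis
    by (cases rule: R_set_cases)
      (auto simp: 1 pos_part_Ra neg_part_Ra pos_part_Rb neg_part_Rb lookup_single when_def
        lookup_pos_part_R0 lookup_neg_part_R0 split: if_splits)
next
  case (2 i')
  have "Poly_Mapping.lookup (pos_part (4*k+2) u') i' \<le> Poly_Mapping.lookup m i'"
    using assms(4) unfolding mon_dvd_def ..
  then have "1 \<le> Poly_Mapping.lookup m i'"
    using 2 by (simp add: pos_part_Ra)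
  with assms(1,3) 2 show ?thesis
    by (cases rule: R_set_cases)
      (auto simp: pos_part_Ra neg_part_Ra pos_part_Rb neg_part_Rb lookup_single when_def
        lookup_pos_part_R0 lookup_neg_part_R0 split: if_splits)
next
  case (3 i')
  have "Poly_Mapping.lookup (pos_part (4*k+2) u') (2*k+i') \<le> Poly_Mapping.lookup m (2*k+i')"
    using assms(4) unfolding mon_dvd_def ..
  then have "1 \<le> Poly_Mapping.lookup m (2*k+i')"
    using 3 by (simp add: pos_part_Rb)
  with assms(1,3) 3 show ?thesis
    by (cases rule: R_set_cases)
      (auto simp: pos_part_Ra neg_part_Ra pos_part_Rb neg_part_Rb lookup_single when_def
        lookup_pos_part_R0 lookup_neg_part_R0 split: if_splits)
qed

lemma not_A_mat_standard_dvd: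
  assumes "\<not> A_mat_standard k m"
  shows "\<exists>u\<in>R_set k. mon_dvd (pos_part (4*k+2) u) m"
proof -
  consider i where "i < k" "Poly_Mapping.lookup m i \<noteq> 0"
    | i where "i < k" "Poly_Mapping.lookup m (2*k+i) \<noteq> 0"
    | "\<forall>i<k. Poly_Mapping.lookup m (k+i) \<noteq> 0" "Poly_Mapping.lookup m (4*k) \<noteq> 0"
    using assms unfolding A_mat_standard_def by auto
  then show ?thesis
  proof cases
    case (1 i)
    have pos: "pos_part (4*k+2) (Ra k i) = Poly_Mapping.single i 1"
      using 1(1) by (intro pos_part_Ra) auto
    have "mon_dvd (pos_part (4*k+2) (Ra k i)) m"
      unfolding pos mon_dvd_single_iff using 1(2) by simp
    moreover have "Ra k i \<in> R_set k"
      using 1(1) unfolding R_set_def by blast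
    ultimately show ?thesis by blast
  next
    case (2 i)
    have pos: "pos_part (4*k+2) (Rb k i) = Poly_Mapping.single (2*k+i) 1"
      using 2(1) by (intro pos_part_Rb) auto
    have "mon_dvd (pos_part (4*k+2) (Rb k i)) m"
      unfolding pos mon_dvd_single_iff using 2(2) by simp
    moreover have "Rb k i \<in> R_set k"
      using 2(1) unfolding R_set_def by blast
    ultimately show ?thesis by blast
  next
    case 3
    have "Poly_Mapping.lookup (pos_part (4*k+2) (R0 k)) j \<le> Poly_Mapping.lookup m j" for j
    proof (cases "k \<le> j \<and> j < 2*k")
      case True
      then have "j - k < k"
        by linarith
      with 3(1) have "Poly_Mapping.lookup m (k + (j - k)) \<noteq> 0"
        by blast
      with True have "Poly_Mapping.lookup m j \<noteq> 0"
        by simp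
      with True show ?thesis
        by (simp add: lookup_pos_part_R0)
    qed (use 3(2) in \<open>auto simp: lookup_pos_part_R0\<close>)
    then have "mon_dvd (pos_part (4*k+2) (R0 k)) m"
      unfolding mon_dvd_def ..
    moreover have "R0 k \<in> R_set k"
      unfolding R_set_def by blast
    ultimately show ?thesis by blast
  qed
qed

lemma binom_R_set_lead:
  assumes "k \<ge> 1" "u \<in> R_set k"
  shows "Poly_Mapping.keys (binom (4*k+2) u :: 'a::field mpoly)
      = {pos_part (4*k+2) u, neg_part (4*k+2) u}"
    and "lead_mon (binom (4*k+2) u :: 'a mpoly) = pos_part (4*k+2) u"
    and "lead_coeff_mp (binom (4*k+2) u :: 'a mpoly) = 1"
  using mon_diff_lead[OF lex_less_neg_part_pos_part_R_set[OF assms]] unfolding binom_def by auto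

lemma zero_notin_binom_R_set:
  assumes "k \<ge> 1"
  shows "(0 :: 'a::field mpoly) \<notin> binom (4*k+2) ` R_set k"
proof
  assume "(0 :: 'a mpoly) \<in> binom (4*k+2) ` R_set k"
  then obtain u where u: "u \<in> R_set k" "binom (4*k+2) u = (0 :: 'a mpoly)"
    by auto
  from u(2) binom_R_set_lead(1)[OF assms u(1), where 'a = 'a] show False
    by simp
qed

lemma binom_R_set_not_dvd:
  assumes "k \<ge> 1" "g \<in> binom (4*k+2) ` R_set k" "g' \<in> binom (4*k+2) ` R_set k" "g' \<noteq> g"
    and "m \<in> Poly_Mapping.keys (g :: 'a::field mpoly)"
  shows "\<not> mon_dvd (lead_mon g') m"
proof
  assume "mon_dvd (lead_mon g') m"
  moreover obtain u u' where u: "u \<in> R_set k" "g = binom (4*k+2) u"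
    and u': "u' \<in> R_set k" "g' = binom (4*k+2) u'"
    using assms(2,3) by blast
  ultimately have "u' = u"
    using assms(5) binom_R_set_lead(1)[OF assms(1) u(1), where 'a = 'a]
      binom_R_set_lead(2)[OF assms(1) u'(1), where 'a = 'a]
    by (intro mon_dvd_pos_part_R_set_unique[OF u(1) u'(1), of m]) simp_all
  then show False
    using assms(4) u(2) u'(2) by simp
qed

lemma lead_mon_toric_A_mat_dvd:
  assumes "k \<ge> 1" "(f :: 'a::field mpoly) \<in> toric_ideal (2*k+1) (4*k+2) (A_mat k)" "f \<noteq> 0"
  shows "\<exists>g\<in>binom (4*k+2) ` R_set k. mon_dvd (lead_mon (g :: 'a mpoly)) (lead_mon f)"
proof -
  obtain u where "u \<in> R_set k" "mon_dvd (pos_part (4*k+2) u) (lead_mon f)"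
    using not_A_mat_standard_dvd lead_mon_toric_A_mat_not_standard[OF assms] by blast
  then show ?thesis
    using binom_R_set_lead(2)[OF assms(1), where 'a = 'a] by auto
qed

theorem theorem3:
  fixes k :: nat
  assumes "k \<ge> 1"
  shows "is_reduced_groebner_basis (4*k+2)
           (toric_ideal (2*k+1) (4*k+2) (A_mat k) :: 'a::field mpoly set)
           (binom (4*k+2) ` R_set k)"
proof -
  let ?I = "toric_ideal (2*k+1) (4*k+2) (A_mat k) :: 'a mpoly set"
  let ?G = "binom (4*k+2) ` R_set k :: 'a mpoly set"
  have "is_groebner_basis (4*k+2) ?I ?G"
  proof (rule is_groebner_basisI)
    show "finite ?G"
      by (simp add: finite_R_set)
    show "?G \<subseteq> ?I"
      using R_set_subset_int_kernel binom_in_toric_ideal by blast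
    show "0 \<notin> ?G"
      by (rule zero_notin_binom_R_set[OF assms])
    show "?I \<subseteq> polyring (4*k+2)"
      by (rule toric_ideal_subset_polyring)
  qed (rule lead_mon_toric_A_mat_dvd[OF assms])
  moreover have "\<forall>g\<in>?G. lead_coeff_mp g = 1"
    using binom_R_set_lead(3)[OF assms] by blast
  ultimately show ?thesis
    unfolding is_reduced_groebner_basis_def using binom_R_set_not_dvd[OF assms] by blast
qed

end
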